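(* Let $G$ be a group, $S\subseteq G$ a subset and $H$ a subgroup of $G$. Suppose the composite map $S\hookrightarrow G\to G/H$ is surjective and at least one fibre of this map contains exactly one element. Then $H$ is a minimal complement of $S$ in $G$.
   Context: $G/H$ denotes the set of left cosets $gH$, i.e. classes of the relation $g_1\sim g_2$ iff $g_1^{-1}g_2\in H$. A nonempty $W'\subseteq G$ is a complement to $W$ if $WW'=G$; it is minimal if no proper subset of $W'$ is a complement to $W$. *)

theory Defs
  imports "HOL-Algebra.Algebra"
begin

definition left_cosets :: "('a, 'b) monoid_scheme \<Rightarrow> 'a set \<Rightarrow> 'a set set" where
  "left_cosets G H = {g <#\<^bsub>G\<^esub> H | g. g \<in> carrier G}"

definition is_complement :: "('a, 'b) monoid_scheme \<Rightarrow> 'a set \<Rightarrow> 'a set \<Rightarrow> bool" where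
  "is_complement G W W' \<longleftrightarrow> W' \<noteq> {} \<and> W' \<subseteq> carrier G \<and> W <#>\<^bsub>G\<^esub> W' = carrier G"

definition is_minimal_complement :: "('a, 'b) monoid_scheme \<Rightarrow> 'a set \<Rightarrow> 'a set \<Rightarrow> bool" where
  "is_minimal_complement G W W' \<longleftrightarrow>
     is_complement G W W' \<and> (\<forall>W''. W'' \<subset> W' \<longrightarrow> \<not> is_complement G W W'')"

end

theory Submission
  imports Defs
begin

text \<open>If every left coset of \<open>H\<close> meets \<open>S\<close>, then \<open>S H = G\<close>. If moreover some \<open>s\<^sub>0 \<in> S\<close> is the only
  element of \<open>S\<close> in its coset, then no proper subset \<open>W\<close> of \<open>H\<close> works: for \<open>h \<in> H\<close>, writing
  \<open>s\<^sub>0 h = s w\<close> with \<open>s \<in> S\<close>, \<open>w \<in> W\<close> puts \<open>s\<close> in the coset \<open>s\<^sub>0 H\<close>, hence \<open>s = s\<^sub>0\<close> and \<open>h = w \<in> W\<close>.\<close>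

lemma (in group) set_mult_eq_carrier_if_cosets_covered:
  assumes S: "S \<subseteq> carrier G" and H: "subgroup H G"
    and cover: "left_cosets G H \<subseteq> (\<lambda>s. s <# H) ` S"
  shows "S <#> H = carrier G"
proof
  show "S <#> H \<subseteq> carrier G"
    using S subgroup.subset[OF H] by (auto simp: set_mult_def)
  show "carrier G \<subseteq> S <#> H"
  proof
    fix g assume g: "g \<in> carrier G"
    then have "g <# H \<in> left_cosets G H"
      unfolding left_cosets_def by blast
    then obtain s where s: "s \<in> S" "s <# H = g <# H"
      using cover by blast
    have "g \<in> s <# H"
      using lcos_self[OF g H] s(2) by simp
    then show "g \<in> S <#> H"
      using s(1) unfolding l_coset_def set_mult_def by blast
  qed
qed

lemma (in group) complement_subset_subgroup_eq:
  assumes S: "S \<subseteq> carrier G" and H: "subgroup H G" and s0: "s0 \<in> S"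
    and unique_rep: "\<And>s. \<lbrakk>s \<in> S; s <# H = s0 <# H\<rbrakk> \<Longrightarrow> s = s0"
    and W: "W \<subseteq> H" and complement: "S <#> W = carrier G"
  shows "W = H"
proof
  show "H \<subseteq> W"
  proof
    fix h assume h: "h \<in> H"
    have s0G: "s0 \<in> carrier G" and hG: "h \<in> carrier G"
      using S s0 h subgroup.subset[OF H] by auto
    then have "s0 \<otimes> h \<in> S <#> W"
      using complement by simp
    then obtain s w where sw: "s \<in> S" "w \<in> W" "s0 \<otimes> h = s \<otimes> w"
      unfolding set_mult_def by blast
    have wH: "w \<in> H" and wG: "w \<in> carrier G" and sG: "s \<in> carrier G"
      using sw W S subgroup.subset[OF H] by auto
    have "s = s0 \<otimes> (h \<otimes> inv w)"
      using sw(3) sG wG s0G hG by (metis inv_solve_right m_assoc inv_closed m_closed)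
    moreover have "h \<otimes> inv w \<in> H"
      using h wH H by (simp add: subgroup.m_closed subgroup.m_inv_closed)
    ultimately have "s \<in> s0 <# H"
      unfolding l_coset_def by blast
    then have "s = s0"
      using unique_rep[OF sw(1)] l_repr_independence[OF _ s0G H] by metis
    then have "h = w"
      using sw(3) s0G hG wG by simp
    then show "h \<in> W"
      using sw(2) by simp
  qed
qed (rule W)

theorem lemma4p2:
  fixes G (structure) and S H :: "'a set"
  assumes "group G"
    and "S \<subseteq> carrier G"
    and "subgroup H G"
    and "(\<lambda>s. s <# H) ` S = left_cosets G H"
    and "\<exists>C \<in> left_cosets G H. card {s \<in> S. s <# H = C} = 1"
  shows "is_minimal_complement G S H"
proof -
  interpret group G by fact
  have "S <#> H = carrier G"
    using set_mult_eq_carrier_if_cosets_covered assms(2-4) by simp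
  then have complement: "is_complement G S H"
    using subgroup.one_closed[OF assms(3)] subgroup.subset[OF assms(3)]
    unfolding is_complement_def by blast
  obtain C s0 where "{s \<in> S. s <# H = C} = {s0}"
    using assms(5) card_1_singletonE by metis
  then have s0: "s0 \<in> S" and unique_rep: "\<And>s. \<lbrakk>s \<in> S; s <# H = s0 <# H\<rbrakk> \<Longrightarrow> s = s0"
    by blast+
  have "\<not> is_complement G S W" if "W \<subset> H" for W
    using complement_subset_subgroup_eq[OF assms(2,3) s0 unique_rep] that
    unfolding is_complement_def by blast
  with complement show ?thesis
    unfolding is_minimal_complement_def by blast
qed

end
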